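(* Let $d\geq3$ and $h\geq 3$. Then \[ \nu_2(T(d,h))=\frac{2\big((d-1)^h-1\big)}{d-2}. \]
   Context: $T(d,h)$ is the $d$-regular tree of depth $h$: a rooted tree in which the root has $d$ children, every other vertex at depth less than $h$ has $d-1$ children, and all leaves are at depth $h$. A $2$-matching of a graph is a set of edges such that every vertex is incident to at most two of them; $\nu_2(G)$ is the maximum size of a $2$-matching of $G$. *)

theory Defs
  imports Complex_Main
begin

text \<open>Graphs are given by their edge set, each edge being a two-element set of vertices.\<close>

text \<open>A vertex is the list of child indices along the path
from the root (the root is the empty list).\<close>

definition reg_tree_vertices :: "nat \<Rightarrow> nat \<Rightarrow> nat list set" where
  "reg_tree_vertices d h =
     {xs. length xs \<le> h \<and> (\<forall>i<length xs. xs ! i < (if i = 0 then d else d - 1))}"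

definition reg_tree_edges :: "nat \<Rightarrow> nat \<Rightarrow> nat list set set" where
  "reg_tree_edges d h =
     {{xs, xs @ [j]} | xs j. xs @ [j] \<in> reg_tree_vertices d h}"

definition is_2_matching :: "'a set set \<Rightarrow> 'a set set \<Rightarrow> bool" where
  "is_2_matching E M \<longleftrightarrow> M \<subseteq> E \<and> (\<forall>v. card {e \<in> M. v \<in> e} \<le> 2)"

definition nu2 :: "'a set set \<Rightarrow> nat" where
  "nu2 E = Max (card ` {M. is_2_matching E M})"

end

theory Submission
  imports Defs
begin

text \<open>Call a vertex odd if its distance to the leaves is odd. Every edge joins consecutive
depths, so it has exactly one odd endpoint: the odd vertices cover all edges, and a
2-matching has at most twice as many edges as the cover has vertices. Conversely, joining
every odd vertex (none of which is a leaf) to two of its children gives a 2-matching of that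
size. With \<open>d (d - 1)\<^sup>i\<^sup>-\<^sup>1\<close> vertices at depth \<open>i \<ge> 1\<close>, the number of odd vertices is a
geometric sum equal to \<open>((d - 1)\<^sup>h - 1) / (d - 2)\<close>.\<close>

lemma card_2_matching_le_vertex_cover:
  assumes M: "is_2_matching E M" and "finite C" and cover: "\<forall>e\<in>E. e \<inter> C \<noteq> {}"
  shows "card M \<le> 2 * card C"
proof (cases "finite M")
  case True
  have "M \<subseteq> (\<Union>v\<in>C. {e \<in> M. v \<in> e})"
    using M cover by (auto simp: is_2_matching_def)
  then have "card M \<le> card (\<Union>v\<in>C. {e \<in> M. v \<in> e})"
    using True \<open>finite C\<close> by (intro card_mono) auto
  also have "\<dots> \<le> (\<Sum>v\<in>C. card {e \<in> M. v \<in> e})"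
    using \<open>finite C\<close> by (rule card_UN_le)
  also have "\<dots> \<le> (\<Sum>v\<in>C. 2)"
    using M by (intro sum_mono) (simp add: is_2_matching_def)
  finally show ?thesis by simp
qed simp

lemma nu2_eqI:
  assumes "finite E" and "is_2_matching E M"
    and "\<And>M'. is_2_matching E M' \<Longrightarrow> card M' \<le> card M"
  shows "nu2 E = card M"
proof -
  have "{M. is_2_matching E M} \<subseteq> Pow E"
    by (auto simp: is_2_matching_def)
  then have "finite (card ` {M. is_2_matching E M})"
    using \<open>finite E\<close> by (meson finite_Pow_iff finite_imageI finite_subset)
  then show ?thesis
    unfolding nu2_def using assms(2,3) by (intro Max_eqI) auto
qed

lemma snoc_doubleton_eq_iff:
  "{xs, xs @ [i]} = {ys, ys @ [j]} \<longleftrightarrow> xs = ys \<and> i = j"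
proof
  assume eq: "{xs, xs @ [i]} = {ys, ys @ [j]}"
  have "xs = ys"
  proof (rule ccontr)
    assume "xs \<noteq> ys"
    then have "xs = ys @ [j]" "ys = xs @ [i]"
      using eq by (auto simp: doubleton_eq_iff)
    then have "length xs = Suc (length ys)" "length ys = Suc (length xs)"
      by simp_all
    then show False
      by simp
  qed
  with eq show "xs = ys \<and> i = j"
    by (auto simp: doubleton_eq_iff)
qed simp

lemma snoc_in_reg_tree_vertices_iff:
  "xs @ [j] \<in> reg_tree_vertices d h \<longleftrightarrow>
     xs \<in> reg_tree_vertices d h \<and> length xs < h \<and> j < (if xs = [] then d else d - 1)"
proof -
  have "(\<forall>k<Suc (length xs). (xs @ [j]) ! k < (if k = 0 then d else d - 1)) \<longleftrightarrow>
        (\<forall>k<length xs. xs ! k < (if k = 0 then d else d - 1)) \<and> j < (if xs = [] then d else d - 1)"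
    by (auto simp: less_Suc_eq nth_append)
  then show ?thesis
    by (auto simp: reg_tree_vertices_def)
qed

lemma finite_reg_tree_vertices: "finite (reg_tree_vertices d h)"
proof -
  have "reg_tree_vertices d h \<subseteq> {xs. set xs \<subseteq> {..<d} \<and> length xs \<le> h}"
  proof
    fix xs assume xs: "xs \<in> reg_tree_vertices d h"
    have "x < d" if x: "x \<in> set xs" for x
    proof -
      obtain k where "k < length xs" and "x = xs ! k"
        using x by (auto simp: in_set_conv_nth)
      with xs show "x < d"
        by (auto simp: reg_tree_vertices_def split: if_splits)
    qed
    with xs show "xs \<in> {xs. set xs \<subseteq> {..<d} \<and> length xs \<le> h}"
      by (auto simp: reg_tree_vertices_def)
  qed
  then show ?thesis
    using finite_lists_length_le[of "{..<d}" h] finite_subset by blast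
qed

lemma finite_reg_tree_edges: "finite (reg_tree_edges d h)"
proof -
  have "reg_tree_edges d h \<subseteq> Pow (reg_tree_vertices d h)"
  proof
    fix e assume "e \<in> reg_tree_edges d h"
    then obtain xs j where "e = {xs, xs @ [j]}" and child: "xs @ [j] \<in> reg_tree_vertices d h"
      by (auto simp: reg_tree_edges_def)
    moreover have "xs \<in> reg_tree_vertices d h"
      using child by (simp add: snoc_in_reg_tree_vertices_iff)
    ultimately show "e \<in> Pow (reg_tree_vertices d h)"
      by simp
  qed
  then show ?thesis
    using finite_reg_tree_vertices finite_subset by blast
qed

definition reg_tree_level :: "nat \<Rightarrow> nat \<Rightarrow> nat \<Rightarrow> nat list set" where
  "reg_tree_level d h i = {xs \<in> reg_tree_vertices d h. length xs = i}"

definition reg_tree_level_size :: "nat \<Rightarrow> nat \<Rightarrow> nat" where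
  "reg_tree_level_size d i = (if i = 0 then 1 else d * (d - 1) ^ (i - 1))"

lemma reg_tree_level_Suc:
  assumes "i < h"
  shows "reg_tree_level d h (Suc i) =
           (\<lambda>(xs, j). xs @ [j]) ` (reg_tree_level d h i \<times> {..<if i = 0 then d else d - 1})"
proof (intro equalityI subsetI)
  fix xs assume xs: "xs \<in> reg_tree_level d h (Suc i)"
  then obtain ys j where ys: "xs = ys @ [j]"
    by (cases xs rule: rev_cases) (auto simp: reg_tree_level_def)
  with xs have "ys \<in> reg_tree_level d h i" and "j < (if i = 0 then d else d - 1)"
    by (auto simp: reg_tree_level_def snoc_in_reg_tree_vertices_iff)
  with ys show "xs \<in> (\<lambda>(xs, j). xs @ [j]) ` (reg_tree_level d h i \<times> {..<if i = 0 then d else d - 1})"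
    by auto
next
  fix xs assume "xs \<in> (\<lambda>(xs, j). xs @ [j]) ` (reg_tree_level d h i \<times> {..<if i = 0 then d else d - 1})"
  then obtain ys j where "xs = ys @ [j]" "ys \<in> reg_tree_level d h i" "j < (if i = 0 then d else d - 1)"
    by auto
  with assms show "xs \<in> reg_tree_level d h (Suc i)"
    by (auto simp: reg_tree_level_def snoc_in_reg_tree_vertices_iff)
qed

lemma card_reg_tree_level:
  assumes "i \<le> h"
  shows "card (reg_tree_level d h i) = reg_tree_level_size d i"
  using assms
proof (induction i)
  case 0
  have "reg_tree_level d h 0 = {[]}"
    by (auto simp: reg_tree_level_def reg_tree_vertices_def)
  then show ?case
    by (simp add: reg_tree_level_size_def)
next
  case (Suc i)
  have "inj_on (\<lambda>(xs, j). xs @ [j]) (reg_tree_level d h i \<times> {..<if i = 0 then d else d - 1})"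
    by (auto simp: inj_on_def)
  then have "card (reg_tree_level d h (Suc i)) =
               card (reg_tree_level d h i) * (if i = 0 then d else d - 1)"
    using Suc.prems by (simp add: reg_tree_level_Suc card_image card_cartesian_product)
  then show ?case
    using Suc by (auto simp: reg_tree_level_size_def power_eq_if)
qed

definition odd_height_vertices :: "nat \<Rightarrow> nat \<Rightarrow> nat list set" where
  "odd_height_vertices d h = {xs \<in> reg_tree_vertices d h. odd (h - length xs)}"

lemma odd_height_vertices_length_less:
  "xs \<in> odd_height_vertices d h \<Longrightarrow> length xs < h"
  unfolding odd_height_vertices_def by (metis (mono_tags) mem_Collect_eq odd_pos zero_less_diff)

lemma odd_height_snoc_iff:
  assumes "length xs < h"
  shows "odd (h - length (xs @ [j])) \<longleftrightarrow> even (h - length xs)"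
proof -
  obtain n where "h - length xs = Suc n"
    using assms by (metis Suc_diff_Suc)
  moreover from this have "h - length (xs @ [j]) = n"
    by simp
  ultimately show ?thesis
    by (simp only:) simp
qed

lemma reg_tree_edge_meets_odd_height_vertices:
  assumes "e \<in> reg_tree_edges d h"
  shows "e \<inter> odd_height_vertices d h \<noteq> {}"
proof -
  obtain xs j where e: "e = {xs, xs @ [j]}" and child: "xs @ [j] \<in> reg_tree_vertices d h"
    using assms unfolding reg_tree_edges_def by blast
  then have "xs \<in> reg_tree_vertices d h" and "length xs < h"
    unfolding snoc_in_reg_tree_vertices_iff by simp_all
  then have "odd (h - length xs) \<or> odd (h - length (xs @ [j]))"
    using odd_height_snoc_iff[OF \<open>length xs < h\<close>, of j] by blast
  then have "xs \<in> odd_height_vertices d h \<or> xs @ [j] \<in> odd_height_vertices d h"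
    using child \<open>xs \<in> reg_tree_vertices d h\<close> unfolding odd_height_vertices_def by blast
  then show ?thesis
    using e by blast
qed

lemma card_odd_height_vertices:
  "card (odd_height_vertices d h) = (\<Sum>i<h. if odd (h - i) then reg_tree_level_size d i else 0)"
proof -
  let ?I = "{i \<in> {..<h}. odd (h - i)}"
  have "odd_height_vertices d h = (\<Union>i\<in>?I. reg_tree_level d h i)"
    unfolding odd_height_vertices_def reg_tree_level_def
  proof safe
    fix xs assume "xs \<in> reg_tree_vertices d h" and odd: "odd (h - length xs)"
    moreover from odd have "length xs < h"
      by (metis odd_pos zero_less_diff)
    ultimately show "xs \<in> (\<Union>i\<in>?I. {xs \<in> reg_tree_vertices d h. length xs = i})"
      by auto
  qed
  then have "card (odd_height_vertices d h) = (\<Sum>i\<in>?I. card (reg_tree_level d h i))"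
    by (simp only:) (intro card_UN_disjoint;
        auto simp: reg_tree_level_def intro: finite_subset[OF _ finite_reg_tree_vertices])
  also have "\<dots> = (\<Sum>i\<in>?I. reg_tree_level_size d i)"
    by (intro sum.cong) (auto simp: card_reg_tree_level)
  also have "\<dots> = (\<Sum>i<h. if odd (h - i) then reg_tree_level_size d i else 0)"
    by (rule sum.inter_filter) simp
  finally show ?thesis .
qed

lemma odd_height_level_sum:
  assumes "d \<ge> 2"
  shows "(d - 2) * (\<Sum>i<h. if odd (h - i) then reg_tree_level_size d i else 0) + 1 = (d - 1) ^ h"
proof (induction h rule: nat_less_induct)
  case (1 h)
  obtain m where d: "d = m + 2"
    using assms le_Suc_ex by (metis add.commute)
  consider "h = 0" | "h = 1" | k where "h = Suc (Suc k)"
    by (metis One_nat_def not0_implies_Suc)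
  then show ?case
  proof cases
    case 3
    have "(\<Sum>i<k. if odd (Suc (Suc k) - i) then reg_tree_level_size d i else 0) =
          (\<Sum>i<k. if odd (k - i) then reg_tree_level_size d i else 0)"
      by (intro sum.cong) (auto simp: Suc_diff_le)
    then have "(\<Sum>i<h. if odd (h - i) then reg_tree_level_size d i else 0) =
               (\<Sum>i<k. if odd (k - i) then reg_tree_level_size d i else 0) + d * (d - 1) ^ k"
      using 3 by (simp add: reg_tree_level_size_def)
    moreover have "m * (\<Sum>i<k. if odd (k - i) then reg_tree_level_size d i else 0) + 1 = (m + 1) ^ k"
      using "1" 3 by (simp add: d)
    moreover have "m * (S + (m + 2) * p) + 1 = p * (m + 1) ^ 2" if "m * S + 1 = p" for S p :: nat
      by (simp flip: that add: algebra_simps power2_eq_square)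
    ultimately show ?thesis
      using 3 by (simp add: d power2_eq_square algebra_simps)
  qed (auto simp: reg_tree_level_size_def d)
qed

definition odd_height_stars :: "nat \<Rightarrow> nat \<Rightarrow> nat list set set" where
  "odd_height_stars d h = {{xs, xs @ [j]} | xs j. xs \<in> odd_height_vertices d h \<and> j < 2}"

lemma card_odd_height_stars: "card (odd_height_stars d h) = 2 * card (odd_height_vertices d h)"
proof -
  have "odd_height_stars d h = (\<lambda>(xs, j). {xs, xs @ [j]}) ` (odd_height_vertices d h \<times> {..<2})"
    by (auto simp: odd_height_stars_def)
  moreover have "inj_on (\<lambda>(xs, j). {xs, xs @ [j]}) (odd_height_vertices d h \<times> {..<2::nat})"
    by (auto simp: inj_on_def snoc_doubleton_eq_iff)
  ultimately show ?thesis
    by (simp add: card_image card_cartesian_product)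
qed

lemma odd_height_stars_2_matching:
  assumes "d \<ge> 3"
  shows "is_2_matching (reg_tree_edges d h) (odd_height_stars d h)"
  unfolding is_2_matching_def
proof (intro conjI allI)
  show "odd_height_stars d h \<subseteq> reg_tree_edges d h"
  proof
    fix e assume "e \<in> odd_height_stars d h"
    then obtain xs j where e: "e = {xs, xs @ [j]}" and xs: "xs \<in> odd_height_vertices d h"
      and "j < 2"
      by (auto simp: odd_height_stars_def)
    with assms have "xs @ [j] \<in> reg_tree_vertices d h"
      by (auto simp: snoc_in_reg_tree_vertices_iff odd_height_vertices_length_less
                     odd_height_vertices_def)
    with e show "e \<in> reg_tree_edges d h"
      by (auto simp: reg_tree_edges_def)
  qed
next
  fix v
  let ?S = "{e \<in> odd_height_stars d h. v \<in> e}"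
  have "?S \<subseteq> (if v \<in> odd_height_vertices d h then {{v, v @ [0]}, {v, v @ [1]}} else {{butlast v, v}})"
  proof
    fix e assume "e \<in> ?S"
    then obtain xs j where e: "e = {xs, xs @ [j]}" and xs: "xs \<in> odd_height_vertices d h"
      and "j < 2" and "v \<in> e"
      by (auto simp: odd_height_stars_def)
    have "xs @ [j] \<notin> odd_height_vertices d h"
      using xs odd_height_snoc_iff[OF odd_height_vertices_length_less[OF xs]]
      by (simp add: odd_height_vertices_def)
    with e xs \<open>j < 2\<close> \<open>v \<in> e\<close>
    show "e \<in> (if v \<in> odd_height_vertices d h then {{v, v @ [0]}, {v, v @ [1]}} else {{butlast v, v}})"
      by (auto simp: less_2_cases_iff)
  qed
  then have "card ?S \<le> card (if v \<in> odd_height_vertices d h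
                                  then {{v, v @ [0]}, {v, v @ [1]}} else {{butlast v, v}})"
    by (intro card_mono) auto
  also have "\<dots> \<le> 2"
    by (auto simp: card_insert_if)
  finally show "card ?S \<le> 2" .
qed

lemma nu2_reg_tree_edges:
  assumes "d \<ge> 3"
  shows "nu2 (reg_tree_edges d h) = 2 * card (odd_height_vertices d h)"
proof -
  have "finite (odd_height_vertices d h)"
    using finite_reg_tree_vertices by (simp add: odd_height_vertices_def)
  then have "card M \<le> card (odd_height_stars d h)" if "is_2_matching (reg_tree_edges d h) M" for M
    using card_2_matching_le_vertex_cover[OF that] reg_tree_edge_meets_odd_height_vertices
    by (simp add: card_odd_height_stars)
  then show ?thesis
    using nu2_eqI[OF finite_reg_tree_edges odd_height_stars_2_matching[OF assms]]
    by (simp add: card_odd_height_stars)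
qed

theorem corollary5p5:
  fixes d h :: nat
  assumes "d \<ge> 3" and "h \<ge> 3"
  shows "real (nu2 (reg_tree_edges d h)) = 2 * (real (d - 1) ^ h - 1) / (real d - 2)"
proof -
  let ?P = "odd_height_vertices d h"
  have "(d - 2) * card ?P + 1 = (d - 1) ^ h"
    using odd_height_level_sum assms(1) by (simp add: card_odd_height_vertices)
  then have "real ((d - 2) * card ?P + 1) = real ((d - 1) ^ h)"
    by (rule arg_cong)
  then have "(real d - 2) * card ?P = real (d - 1) ^ h - 1"
    using assms(1) by (simp add: of_nat_diff)
  then show ?thesis
    using assms(1) by (simp add: nu2_reg_tree_edges field_simps)
qed

end
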